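(* Let $P=\{p_1,\dots,p_n\}\subset\mathbb{R}^2$ be in convex position, labeled counter-clockwise (indices mod $n$), and let $T$ be a triangulation of $P$. Let $d=(d_{ij})$ be the point of the polyhedron $Y$ satisfying $d_{ij}=0$ for all edges $ij$ of $T$ (the vertex of $Y$ corresponding to $T$). Then for every $i$, $$d_{i-1,i+1}=-\det(p_{i-1},p_i,p_{i+1})\bigl(\operatorname{Area}_T(p_i)-\det(p_{i-1},p_i,p_{i+1})\bigr).$$
   Context: $\det(q_0,q_1,q_2)$ is the determinant of the $3\times3$ matrix with columns $(q_0,1),(q_1,1),(q_2,1)$; with counter-clockwise labeling, $\det(p_i,p_j,p_k)>0$ iff $i,j,k$ are in cyclic order. $\operatorname{Area}_T(p_i)=\sum_{l=1}^{t-1}\det(p_i,p_{j_l},p_{j_{l+1}})$ where $p_{j_1},\dots,p_{j_t}$ are the neighbors of $p_i$ in $T$ in angular order from $p_{j_1}=p_{i+1}$ to $p_{j_t}=p_{i-1}$ (twice the total area of the triangles of $T$ at $p_i$). $Y\subset\mathbb{R}^{\binom n2}$ (coordinates $d_{ij}=d_{ji}$) is defined by $d_{ij}\le0$ for all pairs and, for every four distinct indices, $\sum w_{\alpha\beta}d_{\alpha\beta}=1$ over the six pairs of the quadruple, with $w_{\alpha\beta}=1/(\det(p_\alpha,p_\beta,p_\gamma)\det(p_\alpha,p_\beta,p_\delta))$, $\{\gamma,\delta\}$ the other two indices. *)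

theory Defs
  imports Complex_Main
begin

type_synonym pt = "real \<times> real"

text \<open>det(q0,q1,q2): determinant of the 3x3 matrix with columns (q0,1),(q1,1),(q2,1).\<close>
definition det3 :: "pt \<Rightarrow> pt \<Rightarrow> pt \<Rightarrow> real" where
  "det3 a b c =
     fst a * snd b + fst b * snd c + fst c * snd a
   - fst c * snd b - fst b * snd a - fst a * snd c"

definition convex_ccw :: "nat \<Rightarrow> (nat \<Rightarrow> pt) \<Rightarrow> bool" where
  "convex_ccw n p \<longleftrightarrow> (\<forall>i j k. i < j \<and> j < k \<and> k < n \<longrightarrow> det3 (p i) (p j) (p k) > 0)"

definition nxt :: "nat \<Rightarrow> nat \<Rightarrow> nat" where "nxt n i = (i + 1) mod n"
definition prv :: "nat \<Rightarrow> nat \<Rightarrow> nat" where "prv n i = (i + n - 1) mod n"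

text \<open>Segments between points of a convex polygon are encoded as pairs (i,j) with i < j.
  Two such segments cross (in their relative interiors) iff their endpoints interleave.\<close>
definition crosses :: "nat \<times> nat \<Rightarrow> nat \<times> nat \<Rightarrow> bool" where
  "crosses e f \<longleftrightarrow> (case e of (a,b) \<Rightarrow> case f of (c,d) \<Rightarrow>
      (a < c \<and> c < b \<and> b < d) \<or> (c < a \<and> a < d \<and> d < b))"

text \<open>A triangulation of the convex point set: a maximal set of pairwise non-crossing
  segments with endpoints in P (it automatically contains all boundary edges).\<close>
definition triangulation :: "nat \<Rightarrow> (nat \<times> nat) set \<Rightarrow> bool" where
  "triangulation n T \<longleftrightarrow>
     T \<subseteq> {(i,j). i < j \<and> j < n} \<and>
     (\<forall>e\<in>T. \<forall>f\<in>T. \<not> crosses e f) \<and>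
     (\<forall>i j. i < j \<and> j < n \<and> (i,j) \<notin> T \<longrightarrow> (\<exists>f\<in>T. crosses (i,j) f))"

definition is_edge :: "(nat \<times> nat) set \<Rightarrow> nat \<Rightarrow> nat \<Rightarrow> bool" where
  "is_edge T i j \<longleftrightarrow> (min i j, max i j) \<in> T \<and> i \<noteq> j"

text \<open>Neighbours of p i in T, listed in angular order starting at p (i+1) and ending at
  p (i-1); for points in convex position this is the cyclic index order starting after i.\<close>
definition nbrs :: "nat \<Rightarrow> (nat \<times> nat) set \<Rightarrow> nat \<Rightarrow> nat list" where
  "nbrs n T i = sort_key (\<lambda>j. (j + n - i) mod n)
                   (sorted_list_of_set {j. j < n \<and> is_edge T i j})"

definition AreaT :: "nat \<Rightarrow> (nat \<Rightarrow> pt) \<Rightarrow> (nat \<times> nat) set \<Rightarrow> nat \<Rightarrow> real" where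
  "AreaT n p T i = (let L = nbrs n T i in
     (\<Sum>l\<in>{1..<length L}. det3 (p i) (p (L ! (l - 1))) (p (L ! l))))"

definition wt :: "(nat \<Rightarrow> pt) \<Rightarrow> nat \<Rightarrow> nat \<Rightarrow> nat \<Rightarrow> nat \<Rightarrow> real" where
  "wt p a b c e = 1 / (det3 (p a) (p b) (p c) * det3 (p a) (p b) (p e))"

definition inY :: "nat \<Rightarrow> (nat \<Rightarrow> pt) \<Rightarrow> (nat \<Rightarrow> nat \<Rightarrow> real) \<Rightarrow> bool" where
  "inY n p d \<longleftrightarrow>
     (\<forall>i j. i < n \<and> j < n \<and> i \<noteq> j \<longrightarrow> d i j = d j i \<and> d i j \<le> 0) \<and>
     (\<forall>a b c e. a < n \<and> b < n \<and> c < n \<and> e < n \<and> distinct [a,b,c,e] \<longrightarrow>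
        wt p a b c e * d a b + wt p a c b e * d a c + wt p a e b c * d a e
      + wt p b c a e * d b c + wt p b e a c * d b e + wt p c e a b * d c e = 1)"

end

theory Submission
  imports Defs
begin

text \<open>Let q(0) = p(i+1), q(1), ..., q(t) = p(i-1) be the neighbours of p(i) in T in
  counter-clockwise order. No edge of T crosses a spoke from p(i), so consecutive neighbours
  q(l), q(l+1) are joined by an edge of T. In the equation of Y for the quadruple
  q(0), q(l), q(l+1), p(i) four of the six coordinates are therefore 0, and it becomes a linear
  relation between d(q(0), q(l)) and d(q(0), q(l+1)). Together with the cocycle identity for det
  this propagates d(q(0), q(l)) = -A(l) (S(l) - A(l)) along the fan, where
  A(l) = det(p(i), q(0), q(l)) and S(l) is twice the area of the first l triangles at p(i);
  l = t is the claim.\<close>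

lemma det3_rotate: "det3 a b c = det3 b c a"
  by (simp add: det3_def algebra_simps)

lemma det3_swap: "det3 a b c = - det3 b a c"
  by (simp add: det3_def algebra_simps)

lemma det3_cocycle: "det3 b c e = det3 a c e - det3 a b e + det3 a b c"
  by (simp add: det3_def algebra_simps)

definition ccw_offset :: "nat \<Rightarrow> nat \<Rightarrow> nat \<Rightarrow> nat" where
  "ccw_offset n i j = (j + n - i) mod n"

lemma ccw_offset_eq:
  "i < n \<Longrightarrow> j < n \<Longrightarrow> ccw_offset n i j = (if i \<le> j then j - i else j + n - i)"
  by (auto simp: ccw_offset_def mod_if)

lemma ccw_offset_less: "0 < n \<Longrightarrow> ccw_offset n i j < n"
  by (simp add: ccw_offset_def)

lemma ccw_offset_self: "i < n \<Longrightarrow> ccw_offset n i i = 0"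
  by (simp add: ccw_offset_eq)

lemma ccw_offset_inj:
  "i < n \<Longrightarrow> j < n \<Longrightarrow> k < n \<Longrightarrow> ccw_offset n i j = ccw_offset n i k \<Longrightarrow> j = k"
  by (simp add: ccw_offset_eq split: if_splits)

lemma nxt_eq:
  assumes "i < n" shows "nxt n i = (if i + 1 < n then i + 1 else 0)"
proof (cases "i + 1 < n")
  case False
  then have "i + 1 = n" using assms by simp
  then show ?thesis by (simp add: nxt_def)
qed (simp add: nxt_def)

lemma prv_eq: "i < n \<Longrightarrow> prv n i = (if i = 0 then n - 1 else i - 1)"
  by (auto simp: prv_def mod_if)

lemma nxt_less: "i < n \<Longrightarrow> nxt n i < n"
  by (simp add: nxt_eq)

lemma prv_less: "i < n \<Longrightarrow> prv n i < n"
  by (simp add: prv_eq; arith)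

lemma nxt_prv: "i < n \<Longrightarrow> 2 \<le> n \<Longrightarrow> nxt n (prv n i) = i"
  by (simp add: prv_eq nxt_eq)

lemma ccw_offset_nxt:
  "i < n \<Longrightarrow> 2 \<le> n \<Longrightarrow> ccw_offset n i (nxt n i) = 1"
  by (simp add: nxt_eq ccw_offset_eq; arith)

lemma ccw_offset_prv:
  "i < n \<Longrightarrow> 2 \<le> n \<Longrightarrow> ccw_offset n i (prv n i) = n - 1"
  by (simp add: prv_eq ccw_offset_eq)

lemma ordered_imp_cyclic:
  assumes "i < n" "a < n" "b < n" "c < n"
    and "ccw_offset n i a < ccw_offset n i b" "ccw_offset n i b < ccw_offset n i c"
  shows "(a < b \<and> b < c) \<or> (b < c \<and> c < a) \<or> (c < a \<and> a < b)"
  using assms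
  by (cases "i \<le> a"; cases "i \<le> b"; cases "i \<le> c"; simp add: ccw_offset_eq; linarith)

lemma convex_ccw_det3_pos:
  assumes "convex_ccw n p" "i < n" "a < n" "b < n" "c < n"
    and "ccw_offset n i a < ccw_offset n i b" "ccw_offset n i b < ccw_offset n i c"
  shows "det3 (p a) (p b) (p c) > 0"
proof -
  have pos: "det3 (p x) (p y) (p z) > 0" if "x < y" "y < z" "z < n" for x y z
    using assms(1) that unfolding convex_ccw_def by blast
  from ordered_imp_cyclic[OF assms(2-7)] show ?thesis
    using pos[of a b c] pos[of b c a] pos[of c a b] assms(3-5)
      det3_rotate[of "p a" "p b" "p c"] det3_rotate[of "p b" "p c" "p a"]
    by auto
qed

definition strictly_between :: "nat \<Rightarrow> nat \<Rightarrow> nat \<Rightarrow> bool" where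
  "strictly_between a b c \<longleftrightarrow> a < c \<and> c < b \<or> b < c \<and> c < a"

lemma crosses_iff_separated:
  "distinct [a, b, c, e] \<Longrightarrow> crosses (min a b, max a b) (min c e, max c e)
     \<longleftrightarrow> strictly_between a b c \<noteq> strictly_between a b e"
  unfolding crosses_def strictly_between_def min_def max_def by (auto split: if_splits)

lemma strictly_between_ccw_offset:
  assumes "i < n" "a < n" "b < n" "c < n" "distinct [a, b, c]"
  shows "strictly_between (ccw_offset n i a) (ccw_offset n i b) (ccw_offset n i c)
    \<longleftrightarrow> strictly_between a b c \<noteq> (min a b < i \<and> i \<le> max a b)"
  using assms unfolding strictly_between_def min_def max_def
  by (cases "i \<le> a"; cases "i \<le> b"; cases "i \<le> c"; cases "a \<le> b";
      simp add: ccw_offset_eq; linarith)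

lemma crosses_iff_separated_ccw_offset:
  assumes "i < n" "a < n" "b < n" "c < n" "e < n" "distinct [a, b, c, e]"
  shows "crosses (min a b, max a b) (min c e, max c e) \<longleftrightarrow>
    strictly_between (ccw_offset n i a) (ccw_offset n i b) (ccw_offset n i c) \<noteq>
    strictly_between (ccw_offset n i a) (ccw_offset n i b) (ccw_offset n i e)"
  using assms crosses_iff_separated
    strictly_between_ccw_offset[of i n a b c] strictly_between_ccw_offset[of i n a b e]
  by auto

lemma is_edge_sym: "is_edge T a b = is_edge T b a"
  by (auto simp: is_edge_def min_def max_def)

lemma triangulation_edge_less:
  "triangulation n T \<Longrightarrow> (a, b) \<in> T \<Longrightarrow> a < b \<and> b < n"
  unfolding triangulation_def by blast

lemma triangulation_not_crosses:
  "triangulation n T \<Longrightarrow> e \<in> T \<Longrightarrow> f \<in> T \<Longrightarrow> \<not> crosses e f"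
  unfolding triangulation_def by blast

lemma triangulation_crossing_edge:
  assumes "triangulation n T" "a < b" "b < n" "(a, b) \<notin> T"
  obtains c e where "(c, e) \<in> T" "crosses (a, b) (c, e)"
proof -
  obtain f where "f \<in> T" "crosses (a, b) f"
    using assms unfolding triangulation_def by blast
  then show thesis using that by (cases f) auto
qed

lemma crosses_distinct: "crosses (a, b) (c, e) \<Longrightarrow> distinct [a, b, c, e]"
  by (auto simp: crosses_def)

lemma triangulation_boundary_edge:
  assumes "triangulation n T" "2 \<le> n" "i < n"
  shows "is_edge T i (nxt n i)"
proof (cases "i + 1 < n")
  case True
  have "(i, i + 1) \<in> T"
  proof (rule ccontr)
    assume "(i, i + 1) \<notin> T"
    then obtain c e where "crosses (i, i + 1) (c, e)"
      using triangulation_crossing_edge[OF assms(1) less_add_one True] by blast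
    then show False by (auto simp: crosses_def)
  qed
  then show ?thesis using True assms by (simp add: nxt_eq is_edge_def)
next
  case False
  have "(0, n - 1) \<in> T"
  proof (rule ccontr)
    assume "(0, n - 1) \<notin> T"
    then obtain c e where "(c, e) \<in> T" "crosses (0, n - 1) (c, e)"
      using triangulation_crossing_edge[OF assms(1), of 0 "n - 1"] assms(2) by auto
    then show False
      using triangulation_edge_less[OF assms(1)] by (fastforce simp: crosses_def)
  qed
  moreover have "i = n - 1" using False assms(3) by simp
  ultimately show ?thesis using False assms by (simp add: nxt_eq is_edge_def)
qed

lemma sorted_wrt_less_no_elem_between:
  fixes f :: "'a \<Rightarrow> 'b::linorder"
  assumes "sorted_wrt (<) (map f xs)" "Suc l < length xs" "y \<in> set xs"
  shows "\<not> (f (xs ! l) < f y \<and> f y < f (xs ! Suc l))"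
proof -
  obtain k where k: "k < length xs" "xs ! k = y"
    using assms(3) by (auto simp: in_set_conv_nth)
  have mono: "f (xs ! a) \<le> f (xs ! b)" if "a \<le> b" "b < length xs" for a b
    using sorted_nth_mono[of "map f xs" a b] assms(1) that by (simp add: strict_sorted_iff)
  show ?thesis
    using mono[of k l] mono[of "Suc l" k] k assms(2) by (cases "k \<le> l") auto
qed

lemma inY_fan_relation:
  assumes "inY n p d" "b < n" "c < n" "e < n" "i < n" "distinct [b, c, e, i]"
    and "d b i = 0" "d c e = 0" "d c i = 0" "d e i = 0"
    and "det3 (p b) (p c) (p e) \<noteq> 0" "det3 (p i) (p b) (p c) \<noteq> 0"
      "det3 (p i) (p b) (p e) \<noteq> 0"
  shows "d b c * det3 (p i) (p b) (p e) - d b e * det3 (p i) (p b) (p c)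
    = det3 (p b) (p c) (p e) * det3 (p i) (p b) (p c) * det3 (p i) (p b) (p e)"
proof -
  have "wt p b c e i * d b c + wt p b e c i * d b e + wt p b i c e * d b i
      + wt p c e b i * d c e + wt p c i b e * d c i + wt p e i b c * d e i = 1"
    using assms(1-6) unfolding inY_def by blast
  then have "wt p b c e i * d b c + wt p b e c i * d b e = 1"
    using assms(7-10) by simp
  moreover have "wt p b c e i = 1 / (det3 (p b) (p c) (p e) * det3 (p i) (p b) (p c))"
    unfolding wt_def using det3_rotate[of "p i" "p b" "p c"] by simp
  moreover have "wt p b e c i = - 1 / (det3 (p b) (p c) (p e) * det3 (p i) (p b) (p e))"
    unfolding wt_def using det3_rotate[of "p i" "p b" "p e"] det3_swap[of "p b" "p e" "p c"]
      det3_rotate[of "p e" "p b" "p c"] det3_rotate[of "p b" "p c" "p e"] by simp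
  ultimately show ?thesis
    using assms(11-13) by (simp add: field_simps)
qed

lemma inY_sym:
  "inY n p d \<Longrightarrow> a < n \<Longrightarrow> b < n \<Longrightarrow> a \<noteq> b \<Longrightarrow> d a b = d b a"
  by (simp add: inY_def)

locale triangulation_at =
  fixes n :: nat and T :: "(nat \<times> nat) set" and i :: nat
  assumes three_le_n: "3 \<le> n" and triangulation: "triangulation n T" and i_less: "i < n"
begin

abbreviation r :: "nat \<Rightarrow> nat" where "r \<equiv> ccw_offset n i"

abbreviation L :: "nat list" where "L \<equiv> nbrs n T i"

lemma nbrs_eq: "L = sort_key r (sorted_list_of_set {j. j < n \<and> is_edge T i j})"
  by (simp add: nbrs_def ccw_offset_def[abs_def])

lemma set_nbrs: "set L = {j. j < n \<and> is_edge T i j}"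
  by (simp add: nbrs_eq)

lemma ccw_offset_pos: "j < n \<Longrightarrow> j \<noteq> i \<Longrightarrow> 0 < r j"
  using ccw_offset_inj[OF i_less _ i_less] ccw_offset_self[OF i_less] by (metis gr0I)

lemma ccw_offset_nbrs_pos: "j \<in> set L \<Longrightarrow> 0 < r j"
  using ccw_offset_pos by (auto simp: set_nbrs is_edge_def)

lemma sorted_ccw_offset_nbrs: "sorted_wrt (<) (map r L)"
proof -
  have "inj_on r (set L)"
    using ccw_offset_inj[OF i_less] by (auto simp: inj_on_def set_nbrs)
  then show ?thesis
    by (simp add: strict_sorted_iff distinct_map) (simp add: nbrs_eq)
qed

lemma ccw_offset_nbrs_less:
  "k < l \<Longrightarrow> l < length L \<Longrightarrow> r (L ! k) < r (L ! l)"
  using sorted_wrt_nth_less[OF sorted_ccw_offset_nbrs, of k l] by simp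

lemma ccw_offset_nbrs_le:
  "k \<le> l \<Longrightarrow> l < length L \<Longrightarrow> r (L ! k) \<le> r (L ! l)"
  using ccw_offset_nbrs_less[of k l] by (cases "k = l") auto

lemma nth_nbrs_less: "k < length L \<Longrightarrow> L ! k < n"
  using nth_mem set_nbrs by blast

lemma is_edge_nth_nbrs: "k < length L \<Longrightarrow> is_edge T i (L ! k)"
  using nth_mem set_nbrs by blast

lemma nxt_in_nbrs: "nxt n i \<in> set L"
  using triangulation_boundary_edge[OF triangulation _ i_less] three_le_n nxt_less[OF i_less]
  by (simp add: set_nbrs)

lemma prv_in_nbrs: "prv n i \<in> set L"
proof -
  have "is_edge T (prv n i) i"
    using triangulation_boundary_edge[OF triangulation _ prv_less[OF i_less]] three_le_n
      nxt_prv[OF i_less] by simp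
  then show ?thesis
    using prv_less[OF i_less] by (simp add: set_nbrs is_edge_sym)
qed

lemma nbrs_first: "L ! 0 = nxt n i"
proof -
  obtain k where k: "k < length L" "L ! k = nxt n i"
    using nxt_in_nbrs by (auto simp: in_set_conv_nth)
  have L_ne: "0 < length L"
    using k(1) by linarith
  have "r (L ! 0) \<le> r (nxt n i)"
    using ccw_offset_nbrs_le[of 0 k] k by simp
  moreover have "0 < r (L ! 0)"
    using L_ne by (intro ccw_offset_nbrs_pos nth_mem)
  ultimately have "r (L ! 0) = r (nxt n i)"
    using ccw_offset_nxt[OF i_less] three_le_n by simp
  moreover have "L ! 0 < n"
    using L_ne by (rule nth_nbrs_less)
  ultimately show ?thesis
    using ccw_offset_inj[OF i_less _ nxt_less[OF i_less]] by blast
qed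

lemma nbrs_last: "L ! (length L - 1) = prv n i"
proof -
  obtain k where k: "k < length L" "L ! k = prv n i"
    using prv_in_nbrs by (auto simp: in_set_conv_nth)
  then have "r (prv n i) \<le> r (L ! (length L - 1))"
    using ccw_offset_nbrs_le[of k "length L - 1"] by simp
  moreover have "r (L ! (length L - 1)) < n"
    using ccw_offset_less three_le_n by simp
  ultimately have "r (L ! (length L - 1)) = r (prv n i)"
    using ccw_offset_prv[OF i_less] three_le_n by simp
  moreover have "L ! (length L - 1) < n"
    using k(1) nth_nbrs_less by simp
  ultimately show ?thesis
    using ccw_offset_inj[OF i_less _ prv_less[OF i_less]] by blast
qed

lemma nxt_ne_prv: "nxt n i \<noteq> prv n i"
proof
  assume "nxt n i = prv n i"
  then have "(1::nat) = n - 1"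
    using ccw_offset_nxt[OF i_less] ccw_offset_prv[OF i_less] three_le_n by simp
  then show False
    using three_le_n by simp
qed

lemma two_le_length_nbrs: "2 \<le> length L"
proof (rule ccontr)
  assume "\<not> 2 \<le> length L"
  then have "L ! 0 = L ! (length L - 1)"
    by (simp add: numeral_2_eq_2 less_Suc_eq_le)
  then show False
    using nbrs_first nbrs_last nxt_ne_prv by simp
qed

lemma edge_same_side_of_spoke:
  assumes "is_edge T i w" "is_edge T x y" "w < n" "x < n" "y < n" "distinct [i, w, x, y]"
  shows "r x < r w \<longleftrightarrow> r y < r w"
proof -
  have "(min i w, max i w) \<in> T" "(min x y, max x y) \<in> T"
    using assms(1,2) by (auto simp: is_edge_def)
  then have "\<not> crosses (min i w, max i w) (min x y, max x y)"
    using triangulation_not_crosses[OF triangulation] by blast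
  then have "strictly_between (r i) (r w) (r x) = strictly_between (r i) (r w) (r y)"
    using crosses_iff_separated_ccw_offset[OF i_less i_less assms(3-6)] by simp
  moreover have "0 < r x" "0 < r y"
    using ccw_offset_pos assms(4-6) by auto
  ultimately show ?thesis
    by (auto simp: strictly_between_def ccw_offset_self[OF i_less])
qed

text \<open>Otherwise the edge z w would cross the spoke from i to L ! l or to L ! Suc l, or it would
  end at i and make z a neighbour of i strictly between two consecutive ones.\<close>

lemma edge_from_nbrs_gap:
  assumes l: "Suc l < length L"
    and zw: "is_edge T z w" "z < n" "w < n" "distinct [L ! l, L ! Suc l, z, w]"
    and gap: "r (L ! l) < r z" "r z < r (L ! Suc l)"
  shows "r (L ! l) < r w \<and> r w < r (L ! Suc l)"
proof (rule ccontr)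
  define u v where "u = L ! l" and "v = L ! Suc l"
  assume "\<not> (r (L ! l) < r w \<and> r w < r (L ! Suc l))"
  then have out: "\<not> (r u < r w \<and> r w < r v)" unfolding u_def v_def .
  have uv: "u < n" "v < n" "is_edge T i u" "is_edge T i v" "0 < r u" "r u < r v"
    using l nth_nbrs_less is_edge_nth_nbrs ccw_offset_nbrs_pos ccw_offset_nbrs_less[of l "Suc l"]
    unfolding u_def v_def by auto
  have "z \<noteq> i" "u \<noteq> i" "v \<noteq> i"
    using gap uv ccw_offset_self[OF i_less] unfolding u_def[symmetric] v_def[symmetric] by auto
  have "r w \<noteq> r u" "r w \<noteq> r v"
    using ccw_offset_inj[OF i_less] zw uv unfolding u_def[symmetric] v_def[symmetric] by auto
  then consider "w = i" | "w \<noteq> i" "r v < r w" | "w \<noteq> i" "r w < r u"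
    using out by fastforce
  then show False
  proof cases
    case 1
    then have "z \<in> set L"
      using zw \<open>z \<noteq> i\<close> by (simp add: set_nbrs is_edge_sym)
    then show False
      using sorted_wrt_less_no_elem_between[OF sorted_ccw_offset_nbrs l] gap by simp
  next
    case 2
    then show False
      using edge_same_side_of_spoke[OF uv(4) zw(1) uv(2) zw(2,3)] zw(4) gap
        \<open>z \<noteq> i\<close> \<open>v \<noteq> i\<close> unfolding u_def[symmetric] v_def[symmetric] by auto
  next
    case 3
    then show False
      using edge_same_side_of_spoke[OF uv(3) zw(1) uv(1) zw(2,3)] zw(4) gap
        \<open>z \<noteq> i\<close> \<open>u \<noteq> i\<close> unfolding u_def[symmetric] v_def[symmetric] by auto
  qed
qed

lemma nbrs_consecutive_edge:
  assumes l: "Suc l < length L"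
  shows "is_edge T (L ! l) (L ! Suc l)"
proof (rule ccontr)
  define u v where "u = L ! l" and "v = L ! Suc l"
  assume "\<not> is_edge T (L ! l) (L ! Suc l)"
  have uv: "u < n" "v < n" "r u < r v"
    using l nth_nbrs_less ccw_offset_nbrs_less[of l "Suc l"] unfolding u_def v_def by auto
  moreover have "u \<noteq> v"
    using uv(3) by auto
  ultimately have "min u v < max u v" "max u v < n" "(min u v, max u v) \<notin> T"
    using \<open>\<not> is_edge T (L ! l) (L ! Suc l)\<close> unfolding u_def v_def is_edge_def by auto
  then obtain x y where xy: "(x, y) \<in> T" "crosses (min u v, max u v) (x, y)"
    using triangulation_crossing_edge[OF triangulation] by blast
  have "x < y" "y < n" "is_edge T x y" "is_edge T y x"
    using triangulation_edge_less[OF triangulation xy(1)] xy(1) by (auto simp: is_edge_def)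
  moreover have "distinct [u, v, x, y]"
    using crosses_distinct[OF xy(2)] by (auto simp: min_def max_def split: if_splits)
  moreover have "crosses (min u v, max u v) (min x y, max x y)"
    using xy(2) \<open>x < y\<close> by (simp add: min_def max_def)
  ultimately have sep:
      "strictly_between (r u) (r v) (r x) \<noteq> strictly_between (r u) (r v) (r y)"
    using crosses_iff_separated_ccw_offset[OF i_less uv(1,2), of x y] by simp
  have between: "strictly_between (r u) (r v) t \<longleftrightarrow> r u < t \<and> t < r v" for t
    using uv(3) by (auto simp: strictly_between_def)
  have gap: "r u < r w \<and> r w < r v"
    if "is_edge T z w" "z < n" "w < n" "distinct [u, v, z, w]" "r u < r z" "r z < r v" for z w
    using edge_from_nbrs_gap[OF l that(1-3)] that(4-6) unfolding u_def v_def by blast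
  show False
  proof (cases "r u < r x \<and> r x < r v")
    case True
    then show False
      using gap[of x y] sep \<open>is_edge T x y\<close> \<open>distinct [u, v, x, y]\<close> \<open>x < y\<close> \<open>y < n\<close>
      unfolding between by auto
  next
    case False
    then show False
      using gap[of y x] sep \<open>is_edge T y x\<close> \<open>distinct [u, v, x, y]\<close> \<open>x < y\<close> \<open>y < n\<close>
      unfolding between by auto
  qed
qed

end

locale Y_vertex_at = triangulation_at +
  fixes p :: "nat \<Rightarrow> pt" and d :: "nat \<Rightarrow> nat \<Rightarrow> real"
  assumes convex: "convex_ccw n p" and in_Y: "inY n p d"
    and d_edge: "\<And>a b. a < n \<Longrightarrow> b < n \<Longrightarrow> is_edge T a b \<Longrightarrow> d a b = 0"
begin

definition fan_area :: "nat \<Rightarrow> real" where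
  "fan_area l = (\<Sum>m = 1..l. det3 (p i) (p (L ! (m - 1))) (p (L ! m)))"

lemma AreaT_eq_fan_area: "AreaT n p T i = fan_area (length L - 1)"
proof -
  have "{1..<length L} = {1..length L - 1}"
    using two_le_length_nbrs by auto
  then show ?thesis
    by (simp add: AreaT_def fan_area_def Let_def)
qed

lemma d_nxt_nbrs:
  assumes "1 \<le> l" "l < length L"
  shows "d (nxt n i) (L ! l) = - det3 (p i) (p (nxt n i)) (p (L ! l))
    * (fan_area l - det3 (p i) (p (nxt n i)) (p (L ! l)))"
  using assms
proof (induction l rule: nat_induct_at_least)
  case base
  have "is_edge T (nxt n i) (L ! 1)"
    using nbrs_consecutive_edge[of 0] base nbrs_first by simp
  then have "d (nxt n i) (L ! 1) = 0"
    using d_edge nxt_less[OF i_less] nth_nbrs_less base by blast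
  moreover have "fan_area 1 = det3 (p i) (p (nxt n i)) (p (L ! 1))"
    by (simp add: fan_area_def nbrs_first)
  ultimately show ?case by simp
next
  case (Suc l)
  define b c e where "b = nxt n i" and "c = L ! l" and "e = L ! Suc l"
  have IH: "d b c = - det3 (p i) (p b) (p c) * (fan_area l - det3 (p i) (p b) (p c))"
    using Suc unfolding b_def c_def by simp
  have below: "b < n" "c < n" "e < n"
    using nxt_less[OF i_less] nth_nbrs_less Suc unfolding b_def c_def e_def by auto
  have order: "r i < r b" "r b < r c" "r c < r e"
    using ccw_offset_self[OF i_less] ccw_offset_nxt[OF i_less] three_le_n nbrs_first
      ccw_offset_nbrs_less[of 0 l] ccw_offset_nbrs_less[of l "Suc l"] Suc
    unfolding b_def c_def e_def by auto
  then have "distinct [b, c, e, i]"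
    by auto
  moreover have "d b i = 0" "d c e = 0" "d c i = 0" "d e i = 0"
    using d_edge below i_less is_edge_sym triangulation_boundary_edge[OF triangulation _ i_less]
      nbrs_consecutive_edge[of l] is_edge_nth_nbrs[of l] is_edge_nth_nbrs[of "Suc l"] three_le_n Suc
    unfolding b_def c_def e_def by auto
  moreover have pos: "det3 (p b) (p c) (p e) > 0" "det3 (p i) (p b) (p c) > 0"
      "det3 (p i) (p b) (p e) > 0"
    using convex_ccw_det3_pos[OF convex i_less] below i_less order by auto
  ultimately have rel: "d b c * det3 (p i) (p b) (p e) - d b e * det3 (p i) (p b) (p c)
      = det3 (p b) (p c) (p e) * det3 (p i) (p b) (p c) * det3 (p i) (p b) (p e)"
    using inY_fan_relation[OF in_Y below i_less] by simp
  have area: "fan_area (Suc l) = fan_area l + det3 (p i) (p c) (p e)"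
    unfolding fan_area_def c_def e_def by simp
  have "d b e * det3 (p i) (p b) (p c)
      = d b c * det3 (p i) (p b) (p e)
        - det3 (p b) (p c) (p e) * det3 (p i) (p b) (p c) * det3 (p i) (p b) (p e)"
    using rel by linarith
  also have "\<dots> = (- det3 (p i) (p b) (p e) * (fan_area (Suc l) - det3 (p i) (p b) (p e)))
      * det3 (p i) (p b) (p c)"
    unfolding IH area det3_cocycle[of "p b" "p c" "p e" "p i"] by (simp add: algebra_simps)
  finally show ?case
    using mult_right_cancel[of "det3 (p i) (p b) (p c)"] pos(2) unfolding b_def e_def
    by (metis less_irrefl)
qed

lemma d_prv_nxt:
  "d (prv n i) (nxt n i) = - det3 (p (prv n i)) (p i) (p (nxt n i))
    * (AreaT n p T i - det3 (p (prv n i)) (p i) (p (nxt n i)))"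
proof -
  have "d (nxt n i) (prv n i) = - det3 (p i) (p (nxt n i)) (p (prv n i))
      * (AreaT n p T i - det3 (p i) (p (nxt n i)) (p (prv n i)))"
    using d_nxt_nbrs[of "length L - 1"] two_le_length_nbrs nbrs_last AreaT_eq_fan_area by simp
  moreover have "d (prv n i) (nxt n i) = d (nxt n i) (prv n i)"
    using inY_sym[OF in_Y prv_less[OF i_less] nxt_less[OF i_less]] nxt_ne_prv by simp
  ultimately show ?thesis
    using det3_rotate[of "p (prv n i)" "p i" "p (nxt n i)"] by simp
qed

end

theorem lemma5p4:
  fixes n :: nat and p :: "nat \<Rightarrow> real \<times> real" and T :: "(nat \<times> nat) set"
    and d :: "nat \<Rightarrow> nat \<Rightarrow> real"
  assumes "n \<ge> 3"
    and "convex_ccw n p"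
    and "triangulation n T"
    and "inY n p d"
    and "\<forall>i j. i < n \<and> j < n \<and> is_edge T i j \<longrightarrow> d i j = 0"
  shows "\<forall>i < n. d (prv n i) (nxt n i) =
           - det3 (p (prv n i)) (p i) (p (nxt n i))
             * (AreaT n p T i - det3 (p (prv n i)) (p i) (p (nxt n i)))"
proof (intro allI impI)
  fix i assume "i < n"
  interpret Y_vertex_at n T i p d
    using assms \<open>i < n\<close> by unfold_locales auto
  show "d (prv n i) (nxt n i) = - det3 (p (prv n i)) (p i) (p (nxt n i))
      * (AreaT n p T i - det3 (p (prv n i)) (p i) (p (nxt n i)))"
    by (rule d_prv_nxt)
qed

end
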